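(* Let $G=(\mathcal{V},\mathcal{E})$ be a directed graph on $n$ nodes, let $f\ge0$, and let $\mathbf{A}\in\mathbb{R}^{k\times n}$ be an assignment matrix. If for every $\mathcal{F}\subseteq\mathcal{V}$ with $|\mathcal{F}|\le f$, every reduced graph of $G$ with respect to $\mathcal{F}$ contains a source component with at least $\max\{f+1,sp(\mathbf{A})\}$ nodes, then $n\ge\max\{sp(\mathbf{A})+2f,\,3f+1\}$.
   Context: An assignment matrix $\mathbf{A}\in\mathbb{R}^{k\times n}$ has nonnegative entries with each column summing to $1$. Its sparsity parameter $sp(\mathbf{A})$ is the smallest integer $s$ such that the sum of any $s$ columns of $\mathbf{A}$ is component-wise positive ($sp(\mathbf{A})=n+1$ if the sum of all columns is not component-wise positive). The directed graph $G$ has no self-loops. Reduced graph: for a set $\mathcal{F}$ with $|\mathcal{F}|\le f$, a subgraph of $G$ obtained by removing all nodes in $\mathcal{F}$ together with their edges and then removing up to $f$ additional incoming edges at each remaining node. A source component of a directed graph is the set of its nodes each of which has a directed path to every other node of that graph. *)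

theory Defs
  imports Complex_Main
begin

text \<open>Matrices A in R^(k x n) are represented as functions nat => nat => real,
  entry A i j for row i < k and column j < n. Graph nodes are {..<n}.\<close>

definition assignment_matrix :: "nat \<Rightarrow> nat \<Rightarrow> (nat \<Rightarrow> nat \<Rightarrow> real) \<Rightarrow> bool" where
  "assignment_matrix k n A \<longleftrightarrow>
     (\<forall>i<k. \<forall>j<n. A i j \<ge> 0) \<and> (\<forall>j<n. (\<Sum>i<k. A i j) = 1)"

definition cols_positive :: "nat \<Rightarrow> (nat \<Rightarrow> nat \<Rightarrow> real) \<Rightarrow> nat set \<Rightarrow> bool" where
  "cols_positive k A S \<longleftrightarrow> (\<forall>i<k. (\<Sum>j\<in>S. A i j) > 0)"

definition sp :: "nat \<Rightarrow> nat \<Rightarrow> (nat \<Rightarrow> nat \<Rightarrow> real) \<Rightarrow> nat" where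
  "sp k n A =
     (if \<exists>s\<le>n. \<forall>S\<subseteq>{..<n}. card S = s \<longrightarrow> cols_positive k A S
      then (LEAST s. s \<le> n \<and> (\<forall>S\<subseteq>{..<n}. card S = s \<longrightarrow> cols_positive k A S))
      else n + 1)"

definition digraph_on :: "nat set \<Rightarrow> (nat \<times> nat) set \<Rightarrow> bool" where
  "digraph_on V E \<longleftrightarrow> E \<subseteq> V \<times> V \<and> (\<forall>v. (v, v) \<notin> E)"

definition reduced_graph ::
  "nat set \<Rightarrow> (nat \<times> nat) set \<Rightarrow> nat \<Rightarrow> nat set \<Rightarrow> (nat \<times> nat) set \<Rightarrow> bool" where
  "reduced_graph V E f F E' \<longleftrightarrow>
     E' \<subseteq> E \<inter> ((V - F) \<times> (V - F)) \<and>
     (\<forall>v\<in>V - F. card {u. (u, v) \<in> (E \<inter> ((V - F) \<times> (V - F))) - E'} \<le> f)"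

definition source_component :: "nat set \<Rightarrow> (nat \<times> nat) set \<Rightarrow> nat set" where
  "source_component V E = {v \<in> V. \<forall>w\<in>V. (v, w) \<in> E\<^sup>*}"

end

theory Submission
  imports Defs
begin

text \<open>Let m = max (f + 1) (sp A) and suppose n < m + 2f. Delete f nodes (all, if n \<le> f) and split the
  remaining ones into a set L of fewer than m nodes and a set R of at most f nodes.
  Deleting every edge leaving R is a legal reduction, since each node loses in-edges only
  from R. Afterwards no node of R reaches L, so the source component lies inside L or
  inside R, and in both cases it has fewer than m nodes. Only the number sp A enters the
  argument.\<close>

lemma source_component_subset_if_closed:
  assumes "E `` R \<subseteq> R" and "V - R \<noteq> {}"
  shows "source_component V E \<subseteq> V - R"
proof
  fix v assume v: "v \<in> source_component V E"
  show "v \<in> V - R"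
  proof (rule ccontr)
    assume "v \<notin> V - R"
    with v have "v \<in> R" by (auto simp: source_component_def)
    obtain w where w: "w \<in> V - R" using assms(2) by blast
    with v have "w \<in> E\<^sup>* `` R" using \<open>v \<in> R\<close> by (auto simp: source_component_def)
    with w show False using Image_closed_trancl[OF assms(1)] by blast
  qed
qed

lemma card_source_component_le_if_closed:
  assumes "E `` R \<subseteq> R" and "finite V"
  shows "card (source_component V E) \<le> max (card (V - R)) (card (V \<inter> R))"
proof (cases "V - R = {}")
  case True
  then have "source_component V E \<subseteq> V \<inter> R" by (auto simp: source_component_def)
  then show ?thesis using assms(2) by (simp add: card_mono le_max_iff_disj)
next
  case False
  then show ?thesis
    using source_component_subset_if_closed[OF assms(1)] assms(2)
    by (simp add: card_mono le_max_iff_disj)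
qed

lemma reduced_graph_delete_out_edges:
  assumes "finite R" and "card R \<le> f"
  shows "reduced_graph V E f F {(u, v) \<in> E \<inter> ((V - F) \<times> (V - F)). u \<notin> R}"
  unfolding reduced_graph_def
proof (intro conjI ballI)
  fix v
  have "{u. (u, v) \<in> E \<inter> ((V - F) \<times> (V - F)) - {(u, v) \<in> E \<inter> ((V - F) \<times> (V - F)). u \<notin> R}}
        \<subseteq> R" by auto
  then show "card {u. (u, v) \<in> E \<inter> ((V - F) \<times> (V - F))
                   - {(u, v) \<in> E \<inter> ((V - F) \<times> (V - F)). u \<notin> R}} \<le> f"
    using assms card_mono order_trans by blast
qed auto

theorem corollary1:
  fixes n k f :: nat and E :: "(nat \<times> nat) set" and A :: "nat \<Rightarrow> nat \<Rightarrow> real"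
  assumes "digraph_on {..<n} E"
    and "assignment_matrix k n A"
    and "\<forall>F E'. F \<subseteq> {..<n} \<and> card F \<le> f \<and> reduced_graph {..<n} E f F E' \<longrightarrow>
           card (source_component ({..<n} - F) E') \<ge> max (f + 1) (sp k n A)"
  shows "n \<ge> max (sp k n A + 2 * f) (3 * f + 1)"
proof (rule ccontr)
  define m where "m = max (f + 1) (sp k n A)"
  assume "\<not> ?thesis"
  then have n_less: "n < m + 2 * f" by (auto simp: m_def)
  define F where "F = {..<min f n}"
  define R where "R = {min f n + m - 1..<n}"
  define E' where "E' = {(u, v) \<in> E \<inter> (({..<n} - F) \<times> ({..<n} - F)). u \<notin> R}"
  have "reduced_graph {..<n} E f F E'"
    unfolding E'_def using n_less by (intro reduced_graph_delete_out_edges) (auto simp: R_def)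
  moreover have "F \<subseteq> {..<n}" and "card F \<le> f" by (auto simp: F_def)
  ultimately have "m \<le> card (source_component ({..<n} - F) E')"
    using assms(3) unfolding m_def by blast
  also have "\<dots> \<le> max (card ({..<n} - F - R)) (card (({..<n} - F) \<inter> R))"
    by (rule card_source_component_le_if_closed) (auto simp: E'_def)
  also have "\<dots> < m"
  proof -
    have "{..<n} - F - R \<subseteq> {min f n..<min f n + m - 1}" by (auto simp: F_def R_def)
    then have "card ({..<n} - F - R) \<le> card {min f n..<min f n + m - 1}"
      by (intro card_mono) auto
    then have "card ({..<n} - F - R) \<le> m - 1" by simp
    moreover have "card (({..<n} - F) \<inter> R) \<le> card R" by (intro card_mono) (auto simp: R_def)
    moreover have "card R \<le> f" using n_less by (simp add: R_def)
    moreover have "f < m" by (simp add: m_def)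
    ultimately show ?thesis by simp
  qed
  finally show False by simp
qed

end
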